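(* If two gyrochords $A_1A_2$ and $B_1B_2$ of a gyrocircle in the Einstein gyrovector space $\mathbb{R}^n_s$ intersect at a point $P$, then $$\frac{\gamma_{|PA_1|}|PA_1|\,\gamma_{|PA_2|}|PA_2|}{\gamma_{|A_1A_2|}+1}=\frac{\gamma_{|PB_1|}|PB_1|\,\gamma_{|PB_2|}|PB_2|}{\gamma_{|B_1B_2|}+1},$$ where $|XY|=\|\ominus X\oplus Y\|$ denotes gyrodistance and $\gamma_a=(1-a^2/s^2)^{-1/2}$.
   Context: Fix $s>0$, $n\ge2$; $\mathbb{R}^n_s=\{v\in\mathbb{R}^n:\|v\|<s\}$ with Einstein addition $u\oplus v=\frac{1}{1+u\cdot v/s^2}\{u+\frac{1}{\gamma_u}v+\frac{1}{s^2}\frac{\gamma_u}{1+\gamma_u}(u\cdot v)u\}$, $\gamma_v=(1-\|v\|^2/s^2)^{-1/2}$, $\ominus v=-v$. Gyrosegments are Euclidean segments with endpoints in the ball. A gyroplane is $(A_1\oplus\mathrm{span}\{\ominus A_1\oplus A_2,\ominus A_1\oplus A_3\})\cap\mathbb{R}^n_s$ for $\ominus A_1\oplus A_2,\ominus A_1\oplus A_3$ linearly independent; a gyrocircle with gyrocenter $O$ and gyroradius $r>0$ is the set of points of a gyroplane containing $O$ at gyrodistance $r$ from $O$. A gyrochord is a gyrosegment whose two endpoints lie on the gyrocircle. *)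

theory Defs
  imports "HOL-Analysis.Analysis"
begin

definition gam :: "real \<Rightarrow> real \<Rightarrow> real" where
  "gam s a = 1 / sqrt (1 - a\<^sup>2 / s\<^sup>2)"

definition eadd :: "real \<Rightarrow> 'a::real_inner \<Rightarrow> 'a \<Rightarrow> 'a" where
  "eadd s u v = (1 / (1 + (u \<bullet> v) / s\<^sup>2)) *\<^sub>R
     (u + (1 / gam s (norm u)) *\<^sub>R v
        + ((1 / s\<^sup>2) * (gam s (norm u) / (1 + gam s (norm u))) * (u \<bullet> v)) *\<^sub>R u)"

definition gyrodist :: "real \<Rightarrow> 'a::real_inner \<Rightarrow> 'a \<Rightarrow> real" where
  "gyrodist s X Y = norm (eadd s (- X) Y)"

definition gyroplane :: "real \<Rightarrow> 'a::real_inner \<Rightarrow> 'a \<Rightarrow> 'a \<Rightarrow> 'a set" where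
  "gyroplane s A1 A2 A3 =
     {eadd s A1 w | w. w \<in> span {eadd s (- A1) A2, eadd s (- A1) A3}} \<inter> ball 0 s"

definition is_gyroplane :: "real \<Rightarrow> 'a::real_inner set \<Rightarrow> bool" where
  "is_gyroplane s S \<longleftrightarrow> (\<exists>A1 A2 A3. A1 \<in> ball 0 s \<and> A2 \<in> ball 0 s \<and> A3 \<in> ball 0 s \<and>
      eadd s (- A1) A2 \<noteq> eadd s (- A1) A3 \<and>
      independent {eadd s (- A1) A2, eadd s (- A1) A3} \<and>
      S = gyroplane s A1 A2 A3)"

definition gyrocircle :: "real \<Rightarrow> 'a::real_inner set \<Rightarrow> 'a \<Rightarrow> real \<Rightarrow> 'a set" where
  "gyrocircle s S C r = {X \<in> S. gyrodist s C X = r}"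

end

theory Submission
  imports Defs
begin

text \<open>Lift the ball to the hyperboloid of Minkowski space by \<open>X \<mapsto> \<gamma>\<^sub>X (1, X/s)\<close>. The Minkowski
  product of two lifts is the Lorentz factor of their gyrodistance, so the gyrocircle lies in the
  level set \<open>\<langle>C, \<cdot>\<rangle> = \<gamma>\<^sub>r\<close>, and the lift of a point \<open>P\<close> of the Euclidean segment \<open>A\<^sub>1A\<^sub>2\<close> is a
  nonnegative combination of the lifts of \<open>A\<^sub>1\<close> and \<open>A\<^sub>2\<close>. Expanding \<open>\<langle>P, P\<rangle> = 1\<close> in this
  combination shows that the quantity of the theorem equals \<open>s\<^sup>2 (1 - \<langle>C, P\<rangle>\<^sup>2 / \<gamma>\<^sub>r\<^sup>2) / 2\<close>,
  which does not depend on the chord.\<close>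

lemma abs_inner_less_sq:
  fixes u v :: "'a::real_inner"
  assumes "norm u < s" "norm v < s"
  shows "\<bar>u \<bullet> v\<bar> < s\<^sup>2"
proof -
  have "\<bar>u \<bullet> v\<bar> \<le> norm u * norm v" by (rule Cauchy_Schwarz_ineq2)
  also have "\<dots> < s * s" using assms by (simp add: mult_strict_mono')
  finally show ?thesis by (simp add: power2_eq_square)
qed

lemma gam_ge_1:
  assumes "0 \<le> d" "d < s"
  shows "gam s d \<ge> 1"
proof -
  have "d\<^sup>2 < s\<^sup>2" "s > 0" using assms by (auto simp: power_strict_mono)
  hence "0 < 1 - d\<^sup>2/s\<^sup>2" "1 - d\<^sup>2/s\<^sup>2 \<le> 1" by (auto simp: field_simps)
  thus ?thesis unfolding gam_def by (simp add: field_simps)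
qed

lemma gam_sq_mult:
  assumes "0 \<le> d" "d < s"
  shows "(gam s d)\<^sup>2 * (1 - d\<^sup>2/s\<^sup>2) = 1"
proof -
  define X where "X = 1 - d\<^sup>2/s\<^sup>2"
  have "d\<^sup>2 < s\<^sup>2" "s > 0" using assms by (auto simp: power_strict_mono)
  hence "X > 0" unfolding X_def by (auto simp: field_simps)
  thus ?thesis unfolding gam_def X_def[symmetric] by (simp add: power_divide)
qed

lemma gam_mult_eq_sqrt:
  assumes "0 \<le> d" "d < s"
  shows "gam s d * d = s * sqrt ((gam s d)\<^sup>2 - 1)"
proof -
  have "(gam s d * d / s)\<^sup>2 = (gam s d)\<^sup>2 - (gam s d)\<^sup>2 * (1 - d\<^sup>2/s\<^sup>2)"
    using assms by (simp add: field_simps power2_eq_square)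
  hence "(gam s d * d / s)\<^sup>2 = (gam s d)\<^sup>2 - 1" using gam_sq_mult[OF assms] by simp
  moreover have "gam s d * d / s \<ge> 0" using assms gam_ge_1[OF assms] by simp
  ultimately have "sqrt ((gam s d)\<^sup>2 - 1) = gam s d * d / s" by (metis real_sqrt_abs abs_of_nonneg)
  thus ?thesis using assms by simp
qed

lemma eadd_eq_combination:
  fixes u v :: "'a::real_inner"
  assumes "norm u < s"
  defines "e \<equiv> sqrt (1 - (norm u)\<^sup>2/s\<^sup>2)"
  shows "eadd s u v = (1 / (1 + (u \<bullet> v)/s\<^sup>2)) *\<^sub>R
           ((1 + (u \<bullet> v)/(s\<^sup>2*(1+e))) *\<^sub>R u + e *\<^sub>R v)"
proof -
  have "s > 0" using assms(1) by (meson norm_ge_zero le_less_trans)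
  moreover have "(norm u)\<^sup>2 < s\<^sup>2" using assms(1) by (simp add: power_strict_mono)
  ultimately have e0: "e > 0" unfolding e_def by (simp add: field_simps)
  have "(1 / s\<^sup>2) * ((1/e) / (1 + 1/e)) * (u \<bullet> v) = (u \<bullet> v)/(s\<^sup>2*(1+e))"
    using e0 by (simp add: field_simps)
  moreover have "gam s (norm u) = 1/e" unfolding gam_def e_def by simp
  ultimately show ?thesis unfolding eadd_def using e0 by (simp add: scaleR_add_left algebra_simps)
qed

text \<open>The identity behind the Lorentz factor of an Einstein sum, in the variables
  \<open>e = 1/\<gamma>\<^sub>u\<close>, \<open>w = u\<bullet>v/s\<^sup>2\<close>, \<open>Y = \<parallel>v\<parallel>\<^sup>2/s\<^sup>2\<close>.\<close>
lemma einstein_norm_identity: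
  fixes a e w Y :: real
  assumes "a * (1 + e) = 1 + e + w"
  shows "(1 + w)\<^sup>2 - (a\<^sup>2 * (1 - e\<^sup>2) + 2 * a * e * w + e\<^sup>2 * Y) = e\<^sup>2 * (1 - Y)"
proof -
  have "w = a * (1 + e) - 1 - e" using assms by simp
  then show ?thesis by (simp only:) (simp add: power2_eq_square algebra_simps)
qed

lemma one_minus_norm_eadd_sq:
  fixes u v :: "'a::real_inner"
  assumes u: "norm u < s" and v: "norm v < s"
  shows "1 - (norm (eadd s u v))\<^sup>2 / s\<^sup>2 =
     (1 - (norm u)\<^sup>2/s\<^sup>2) * (1 - (norm v)\<^sup>2/s\<^sup>2) / (1 + (u \<bullet> v)/s\<^sup>2)\<^sup>2"
proof -
  define e where "e = sqrt (1 - (norm u)\<^sup>2/s\<^sup>2)"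
  define w where "w = (u \<bullet> v)/s\<^sup>2"
  define a where "a = (1 + e + w) / (1 + e)"
  have "s > 0" using u by (meson norm_ge_zero le_less_trans)
  hence s2: "s\<^sup>2 > 0" by simp
  have "(norm u)\<^sup>2 < s\<^sup>2" using u by (simp add: power_strict_mono)
  hence e0: "e > 0" and ee: "e\<^sup>2 = 1 - (norm u)\<^sup>2/s\<^sup>2" unfolding e_def using s2 by (auto simp: field_simps)
  have D0: "1 + w > 0" unfolding w_def using abs_inner_less_sq[OF u v] s2
    by (simp add: field_simps abs_less_iff)
  have "s\<^sup>2*(1+e) > 0" using e0 s2 by simp
  hence a_eq: "a * (1 + e) = 1 + e + w" "1 + (u \<bullet> v)/(s\<^sup>2*(1+e)) = a"
    unfolding a_def w_def using e0 s2 by (simp_all add: field_simps)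
  hence "eadd s u v = (1/(1+w)) *\<^sub>R (a *\<^sub>R u + e *\<^sub>R v)"
    using eadd_eq_combination[OF u, of v] unfolding e_def w_def by simp
  hence "(norm (eadd s u v))\<^sup>2 = (a\<^sup>2 * (norm u)\<^sup>2 + 2*a*e*(u \<bullet> v) + e\<^sup>2 * (norm v)\<^sup>2) / (1+w)\<^sup>2"
    unfolding power2_norm_eq_inner
    by (simp add: inner_add_left inner_add_right inner_commute power2_eq_square algebra_simps
        add_divide_distrib)
  hence "(norm (eadd s u v))\<^sup>2 / s\<^sup>2
      = (a\<^sup>2 * ((norm u)\<^sup>2/s\<^sup>2) + 2*a*e*w + e\<^sup>2 * ((norm v)\<^sup>2/s\<^sup>2)) / (1+w)\<^sup>2"
    unfolding w_def using s2 by (simp add: field_simps)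
  also have "\<dots> = (a\<^sup>2 * (1 - e\<^sup>2) + 2*a*e*w + e\<^sup>2 * ((norm v)\<^sup>2/s\<^sup>2)) / (1+w)\<^sup>2"
    using ee by simp
  finally have "1 - (norm (eadd s u v))\<^sup>2 / s\<^sup>2
      = ((1+w)\<^sup>2 - (a\<^sup>2 * (1 - e\<^sup>2) + 2*a*e*w + e\<^sup>2 * ((norm v)\<^sup>2/s\<^sup>2))) / (1+w)\<^sup>2"
    using D0 by (simp add: field_simps)
  also have "\<dots> = e\<^sup>2 * (1 - (norm v)\<^sup>2/s\<^sup>2) / (1+w)\<^sup>2"
    by (simp only: einstein_norm_identity[OF a_eq(1)])
  finally show ?thesis using ee unfolding w_def by simp
qed

text \<open>The Minkowski product of the lifts \<open>\<gamma>\<^sub>X (1, X/s)\<close> and \<open>\<gamma>\<^sub>Y (1, Y/s)\<close>.\<close>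
definition minkowski_pairing :: "real \<Rightarrow> 'a::real_inner \<Rightarrow> 'a \<Rightarrow> real" where
  "minkowski_pairing s X Y = gam s (norm X) * gam s (norm Y) * (1 - (X \<bullet> Y)/s\<^sup>2)"

lemma minkowski_pairing_commute: "minkowski_pairing s X Y = minkowski_pairing s Y X"
  unfolding minkowski_pairing_def by (simp add: inner_commute)

lemma minkowski_pairing_self:
  fixes X :: "'a::real_inner"
  assumes "norm X < s"
  shows "minkowski_pairing s X X = 1"
  using gam_sq_mult[OF norm_ge_zero assms] unfolding minkowski_pairing_def
  by (simp add: power2_norm_eq_inner[symmetric] power2_eq_square)

lemma
  fixes u v :: "'a::real_inner"
  assumes u: "norm u < s" and v: "norm v < s"
  shows gyrodist_less: "gyrodist s u v < s"
    and gam_gyrodist: "gam s (gyrodist s u v) = minkowski_pairing s u v"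
proof -
  define d where "d = gyrodist s u v"
  have "s > 0" using u by (meson norm_ge_zero le_less_trans)
  hence s2: "s\<^sup>2 > 0" by simp
  have e: "1 - d\<^sup>2/s\<^sup>2 = (1 - (norm u)\<^sup>2/s\<^sup>2) * (1 - (norm v)\<^sup>2/s\<^sup>2) / (1 - (u \<bullet> v)/s\<^sup>2)\<^sup>2"
    using one_minus_norm_eadd_sq[of "- u" s v] u v unfolding d_def gyrodist_def by simp
  have eu: "1 - (norm u)\<^sup>2/s\<^sup>2 > 0" using u s2 by (simp add: field_simps power_strict_mono)
  have ev: "1 - (norm v)\<^sup>2/s\<^sup>2 > 0" using v s2 by (simp add: field_simps power_strict_mono)
  have D: "1 - (u \<bullet> v)/s\<^sup>2 > 0"
    using abs_inner_less_sq[OF u v] s2 by (simp add: field_simps abs_less_iff)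
  have "1 - d\<^sup>2/s\<^sup>2 > 0"
    unfolding e by (rule divide_pos_pos[OF mult_pos_pos[OF eu ev] zero_less_power[OF D]])
  hence "d\<^sup>2 < s\<^sup>2" using s2 by (simp add: field_simps)
  moreover have "d \<ge> 0" unfolding d_def gyrodist_def by simp
  ultimately show "gyrodist s u v < s" unfolding d_def[symmetric] using \<open>s > 0\<close>
    by (meson power_less_imp_less_base less_imp_le)
  have "sqrt (1 - d\<^sup>2/s\<^sup>2) = sqrt (1 - (norm u)\<^sup>2/s\<^sup>2) * sqrt (1 - (norm v)\<^sup>2/s\<^sup>2) / (1 - (u \<bullet> v)/s\<^sup>2)"
    unfolding e using D by (simp add: real_sqrt_mult real_sqrt_divide)
  thus "gam s (gyrodist s u v) = minkowski_pairing s u v"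
    unfolding d_def[symmetric] minkowski_pairing_def gam_def using D eu ev by (simp add: field_simps)
qed

lemma minkowski_pairing_ge_1:
  fixes X Y :: "'a::real_inner"
  assumes "norm X < s" "norm Y < s"
  shows "minkowski_pairing s X Y \<ge> 1"
  using gam_gyrodist[OF assms] gam_ge_1[OF _ gyrodist_less[OF assms]]
  unfolding gyrodist_def by simp

lemma gam_gyrodist_mult_gyrodist:
  fixes X Y :: "'a::real_inner"
  assumes "norm X < s" "norm Y < s"
  shows "gam s (gyrodist s X Y) * gyrodist s X Y = s * sqrt ((minkowski_pairing s X Y)\<^sup>2 - 1)"
  using gam_mult_eq_sqrt[OF _ gyrodist_less[OF assms]] gam_gyrodist[OF assms]
  unfolding gyrodist_def by simp

lemma minkowski_pairing_segment:
  fixes A1 A2 Y :: "'a::real_inner" and t :: real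
  assumes a1: "norm A1 < s" and a2: "norm A2 < s"
  defines "P \<equiv> (1 - t) *\<^sub>R A1 + t *\<^sub>R A2"
  shows "minkowski_pairing s P Y = gam s (norm P) *
     ((1 - t) / gam s (norm A1) * minkowski_pairing s A1 Y
      + t / gam s (norm A2) * minkowski_pairing s A2 Y)"
proof -
  have "gam s (norm A1) \<noteq> 0" "gam s (norm A2) \<noteq> 0"
    using gam_ge_1[OF norm_ge_zero a1] gam_ge_1[OF norm_ge_zero a2] by auto
  have "1 - P \<bullet> Y / s\<^sup>2 = (1 - t) * (1 - A1 \<bullet> Y / s\<^sup>2) + t * (1 - A2 \<bullet> Y / s\<^sup>2)"
    unfolding P_def by (simp add: inner_add_left algebra_simps add_divide_distrib diff_divide_distrib)
  hence "minkowski_pairing s P Y = gam s (norm P) * gam s (norm Y) *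
      ((1 - t) * (1 - A1 \<bullet> Y / s\<^sup>2) + t * (1 - A2 \<bullet> Y / s\<^sup>2))"
    unfolding minkowski_pairing_def by simp
  also have "\<dots> = gam s (norm P) *
     ((1 - t) / gam s (norm A1) * minkowski_pairing s A1 Y
      + t / gam s (norm A2) * minkowski_pairing s A2 Y)"
    unfolding minkowski_pairing_def using \<open>gam s (norm A1) \<noteq> 0\<close> \<open>gam s (norm A2) \<noteq> 0\<close>
    by (simp add: field_simps)
  finally show ?thesis .
qed

lemma chord_product_identity:
  fixes l \<alpha> \<beta> c k s :: real
  assumes "l > 0" "\<alpha> \<ge> 0" "\<beta> \<ge> 0" "c \<ge> 1" "k \<noteq> 0"
    and norm_one: "l\<^sup>2 * (\<alpha>\<^sup>2 + 2 * \<alpha> * \<beta> * c + \<beta>\<^sup>2) = 1"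
  shows "s * sqrt ((l * (\<alpha> + \<beta> * c))\<^sup>2 - 1) * (s * sqrt ((l * (\<alpha> * c + \<beta>))\<^sup>2 - 1)) / (c + 1)
       = s\<^sup>2 * (1 - (l * (\<alpha> + \<beta>) * k)\<^sup>2 / k\<^sup>2) / 2"
proof -
  have "(l * (\<alpha> + \<beta> * c))\<^sup>2 - 1 = (l * \<beta>)\<^sup>2 * (c\<^sup>2 - 1)"
    using norm_one by (simp add: power2_eq_square algebra_simps)
  hence sqrt1: "sqrt ((l * (\<alpha> + \<beta> * c))\<^sup>2 - 1) = l * \<beta> * sqrt (c\<^sup>2 - 1)"
    using assms by (simp add: real_sqrt_mult)
  have "(l * (\<alpha> * c + \<beta>))\<^sup>2 - 1 = (l * \<alpha>)\<^sup>2 * (c\<^sup>2 - 1)"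
    using norm_one by (simp add: power2_eq_square algebra_simps)
  hence sqrt2: "sqrt ((l * (\<alpha> * c + \<beta>))\<^sup>2 - 1) = l * \<alpha> * sqrt (c\<^sup>2 - 1)"
    using assms by (simp add: real_sqrt_mult)
  have "c\<^sup>2 - 1 \<ge> 0" using \<open>c \<ge> 1\<close> by (simp add: one_le_power)
  hence "sqrt (c\<^sup>2 - 1) * sqrt (c\<^sup>2 - 1) = (c - 1) * (c + 1)"
    by (simp add: power2_eq_square algebra_simps)
  hence "s * sqrt ((l * (\<alpha> + \<beta> * c))\<^sup>2 - 1) * (s * sqrt ((l * (\<alpha> * c + \<beta>))\<^sup>2 - 1)) / (c + 1)
       = s\<^sup>2 * l\<^sup>2 * \<alpha> * \<beta> * (c - 1)"
    unfolding sqrt1 sqrt2 using \<open>c \<ge> 1\<close> by (simp add: field_simps power2_eq_square)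
  also have "\<dots> = s\<^sup>2 * (1 - l\<^sup>2 * (\<alpha> + \<beta>)\<^sup>2) / 2"
    by (subst norm_one[symmetric]) (simp add: power2_eq_square algebra_simps)
  also have "\<dots> = s\<^sup>2 * (1 - (l * (\<alpha> + \<beta>) * k)\<^sup>2 / k\<^sup>2) / 2"
    using \<open>k \<noteq> 0\<close> by (simp add: power_mult_distrib)
  finally show ?thesis .
qed

lemma chord_product_eq_power:
  fixes A1 A2 C P :: "'a::real_inner"
  assumes a1: "norm A1 < s" and a2: "norm A2 < s" and c: "norm C < s"
    and P: "P \<in> closed_segment A1 A2"
    and k1: "minkowski_pairing s C A1 = k" and k2: "minkowski_pairing s C A2 = k"
  shows "gam s (gyrodist s P A1) * gyrodist s P A1 * (gam s (gyrodist s P A2) * gyrodist s P A2)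
           / (gam s (gyrodist s A1 A2) + 1)
       = s\<^sup>2 * (1 - (minkowski_pairing s C P)\<^sup>2 / k\<^sup>2) / 2"
proof -
  obtain t where t: "0 \<le> t" "t \<le> 1" and P_eq: "P = (1 - t) *\<^sub>R A1 + t *\<^sub>R A2"
    using P unfolding closed_segment_def by auto
  have "closed_segment A1 A2 \<subseteq> ball 0 s"
    using a1 a2 by (intro closed_segment_subset convex_ball) auto
  hence p: "norm P < s" using P by auto
  define l where "l = gam s (norm P)"
  define \<alpha> where "\<alpha> = (1 - t) / gam s (norm A1)"
  define \<beta> where "\<beta> = t / gam s (norm A2)"
  define c where "c = minkowski_pairing s A1 A2"
  have lin: "\<And>Y. minkowski_pairing s P Y
      = l * (\<alpha> * minkowski_pairing s A1 Y + \<beta> * minkowski_pairing s A2 Y)"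
    unfolding P_eq l_def \<alpha>_def \<beta>_def by (rule minkowski_pairing_segment[OF a1 a2])
  have p1: "minkowski_pairing s P A1 = l * (\<alpha> + \<beta> * c)"
    unfolding lin c_def by (simp add: minkowski_pairing_self[OF a1] minkowski_pairing_commute[of s A2])
  have p2: "minkowski_pairing s P A2 = l * (\<alpha> * c + \<beta>)"
    unfolding lin c_def by (simp add: minkowski_pairing_self[OF a2])
  have "1 = l * (\<alpha> * minkowski_pairing s P A1 + \<beta> * minkowski_pairing s P A2)"
    using lin[of P] minkowski_pairing_self[OF p] minkowski_pairing_commute by metis
  hence norm_one: "l\<^sup>2 * (\<alpha>\<^sup>2 + 2 * \<alpha> * \<beta> * c + \<beta>\<^sup>2) = 1"
    unfolding p1 p2 by (simp add: power2_eq_square algebra_simps)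
  have CP: "minkowski_pairing s C P = l * (\<alpha> + \<beta>) * k"
    using lin[of C] minkowski_pairing_commute k1 k2 by (metis distrib_left mult.commute mult.assoc)
  have "l > 0" unfolding l_def using gam_ge_1[OF norm_ge_zero p] by simp
  moreover have "\<alpha> \<ge> 0" "\<beta> \<ge> 0"
    unfolding \<alpha>_def \<beta>_def using t gam_ge_1[OF norm_ge_zero a1] gam_ge_1[OF norm_ge_zero a2] by simp_all
  moreover have "c \<ge> 1" unfolding c_def by (rule minkowski_pairing_ge_1[OF a1 a2])
  moreover have "k \<noteq> 0" using minkowski_pairing_ge_1[OF c a1] k1 by simp
  ultimately show ?thesis
    using chord_product_identity[OF _ _ _ _ _ norm_one, where s = s]
    unfolding CP gam_gyrodist_mult_gyrodist[OF p a1] gam_gyrodist_mult_gyrodist[OF p a2]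
      gam_gyrodist[OF a1 a2] p1 p2 c_def[symmetric]
    by simp
qed

lemma is_gyroplane_subset_ball: "is_gyroplane s S \<Longrightarrow> S \<subseteq> ball 0 s"
  unfolding is_gyroplane_def gyroplane_def by auto

lemma minkowski_pairing_gyrocircle:
  assumes "S \<subseteq> ball 0 s" "C \<in> S" "X \<in> gyrocircle s S C r"
  shows "norm X < s" "minkowski_pairing s C X = gam s r"
proof -
  show X: "norm X < s" using assms unfolding gyrocircle_def by auto
  have "norm C < s" using assms by auto
  thus "minkowski_pairing s C X = gam s r"
    using gam_gyrodist[OF _ X] assms(3) unfolding gyrocircle_def by auto
qed

theorem mainTheorem6:
  fixes s r :: real and S :: "(real ^ 'n) set"
    and C A1 A2 B1 B2 P :: "real ^ 'n"
  assumes "CARD('n) \<ge> 2" and "s > 0"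
    and "is_gyroplane s S" and "C \<in> S" and "r > 0"
    and "A1 \<in> gyrocircle s S C r" and "A2 \<in> gyrocircle s S C r"
    and "B1 \<in> gyrocircle s S C r" and "B2 \<in> gyrocircle s S C r"
    and "A1 \<noteq> A2" and "B1 \<noteq> B2"
    and "P \<in> closed_segment A1 A2" and "P \<in> closed_segment B1 B2"
  shows "gam s (gyrodist s P A1) * gyrodist s P A1 * (gam s (gyrodist s P A2) * gyrodist s P A2)
           / (gam s (gyrodist s A1 A2) + 1)
       = gam s (gyrodist s P B1) * gyrodist s P B1 * (gam s (gyrodist s P B2) * gyrodist s P B2)
           / (gam s (gyrodist s B1 B2) + 1)"
proof -
  have S: "S \<subseteq> ball 0 s" using assms(3) by (rule is_gyroplane_subset_ball)
  have C: "norm C < s" using assms(4) S by auto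
  note on_circle = minkowski_pairing_gyrocircle[OF S assms(4)]
  show ?thesis
    using chord_product_eq_power[OF on_circle(1)[OF assms(6)] on_circle(1)[OF assms(7)] C assms(12)
            on_circle(2)[OF assms(6)] on_circle(2)[OF assms(7)]]
      chord_product_eq_power[OF on_circle(1)[OF assms(8)] on_circle(1)[OF assms(9)] C assms(13)
            on_circle(2)[OF assms(8)] on_circle(2)[OF assms(9)]]
    by (simp only:)
qed

end
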